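(* For every integer $m\ge1$ the following identities hold: $$\sum_{k=0}^{m}\frac{\binom{m}{k}\binom{m}{k}}{\binom{2m}{2k}}=\frac{(2m)!!}{(2m-1)!!}=4^m\frac{(m!)^2}{(2m)!},$$ $$\sum_{k=0}^{m}\frac{\binom{m}{k}\binom{m}{k+1}}{\binom{2m}{2k}}=2m+1-\frac{(2m)!!}{(2m-1)!!},$$ $$\sum_{k=0}^{m}\frac{\binom{m}{k}\binom{m+1}{k+1}}{\binom{2m}{2k}}=2m+1.$$
   Context: Convention: $\binom{m}{m+1}=0$, $\binom{m}{0}=1$. $(2m)!!=2\cdot4\cdots(2m)$, $(2m-1)!!=1\cdot3\cdots(2m-1)$. *)

theory Defs
  imports Complex_Main
begin

text \<open>(2m)!! = 2*4*...*(2m) and (2m-1)!! = 1*3*...*(2m-1), as in the paper's convention.\<close>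
definition even_dfact :: "nat \<Rightarrow> nat" where
  "even_dfact m = (\<Prod>i=1..m. 2 * i)"

definition odd_dfact :: "nat \<Rightarrow> nat" where
  "odd_dfact m = (\<Prod>i=1..m. 2 * i - 1)"

end

theory Submission
  imports Defs "HOL-Computational_Algebra.Formal_Power_Series"
begin

text \<open>Dividing by \<open>C(2m,2k)\<close> turns \<open>C(m,k)\<^sup>2\<close> into \<open>C(2k,k) C(2m-2k,m-k) / C(2m,m)\<close>,
  so the first sum is a convolution of central binomial coefficients. Since
  \<open>C(2k,k) = (-4)\<^sup>k C(-1/2,k)\<close>, Vandermonde's identity evaluates it to \<open>4\<^sup>m\<close>.
  In the third sum the absorption identity \<open>C(m+1,k+1) = (m+1)/(k+1) C(m,k)\<close> replaces one central
  binomial factor by a Catalan number \<open>C(2k,k)/(k+1) = 2 (-4)\<^sup>k C(1/2,k+1)\<close>, and Vandermonde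
  for \<open>1/2\<close> and \<open>-1/2\<close> evaluates that convolution to \<open>C(2m+2,m+1)/2\<close>. The second sum is
  the difference of the other two by Pascal's rule.\<close>

lemma central_binomial_gbinomial:
  "of_nat ((2*k) choose k) = (-4) ^ k * ((-1/2 :: 'a::field_char_0) gchoose k)"
proof -
  have "(of_nat ((2*k) choose k) :: 'a) = fact (2*k) / (fact k * fact k)"
    using binomial_fact[of k "2*k"] by simp
  also have "\<dots> = 4 ^ k * pochhammer (1/2) k / fact k"
    by (simp add: fact_double power_mult)
  also have "\<dots> = (-4) ^ k * ((-1/2) gchoose k)"
    by (simp add: gbinomial_pochhammer power_mult_distrib[symmetric])
  finally show ?thesis .
qed

lemma central_binomial_convolution:
  "(\<Sum>k=0..m. ((2*k) choose k) * ((2*(m-k)) choose (m-k))) = 4 ^ m"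
proof -
  have "real ((2*k) choose k) * real ((2*(m-k)) choose (m-k))
      = (-4) ^ m * (((-1/2) gchoose k) * ((-1/2) gchoose (m-k)))" if "k \<le> m" for k
  proof -
    have "(-4::real) ^ m = (-4) ^ k * (-4) ^ (m-k)"
      using that by (simp flip: power_add)
    then show ?thesis
      unfolding central_binomial_gbinomial by (simp only: ac_simps)
  qed
  then have "(\<Sum>k=0..m. real ((2*k) choose k) * real ((2*(m-k)) choose (m-k)))
      = (-4) ^ m * (\<Sum>k=0..m. ((-1/2) gchoose k) * ((-1/2) gchoose (m-k)))"
    unfolding sum_distrib_left by (intro sum.cong) simp_all
  also have "\<dots> = (-4) ^ m * ((-1) gchoose m)"
    by (simp only: gbinomial_Vandermonde) simp
  also have "\<dots> = 4 ^ m"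
    using gbinomial_minus[of "1::real" m]
    by (simp add: binomial_gbinomial[symmetric] power_mult_distrib[symmetric])
  finally have "real (\<Sum>k=0..m. ((2*k) choose k) * ((2*(m-k)) choose (m-k))) = real (4 ^ m)"
    by simp
  then show ?thesis
    by (simp only: of_nat_eq_iff)
qed

lemma catalan_convolution:
  "(\<Sum>k=0..m. of_nat ((2*k) choose k) / of_nat (k+1) * of_nat ((2*(m-k)) choose (m-k)))
     = (of_nat ((2*(m+1)) choose (m+1)) / 2 :: 'a::field_char_0)"
proof -
  have catalan: "of_nat ((2*k) choose k) / of_nat (k+1) = 2 * (-4) ^ k * ((1/2 :: 'a) gchoose Suc k)"
    for k
  proof -
    have "(-1/2 :: 'a) gchoose k = 2 * of_nat (Suc k) * ((1/2) gchoose Suc k)"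
      using Suc_times_gbinomial[of k "-1/2::'a"] by (simp add: algebra_simps)
    moreover have "(of_nat (k+1) :: 'a) \<noteq> 0"
      by (simp only: of_nat_eq_0_iff)
    ultimately show ?thesis
      unfolding central_binomial_gbinomial by (simp add: field_simps)
  qed
  have "of_nat ((2*k) choose k) / of_nat (k+1) * of_nat ((2*(m-k)) choose (m-k))
      = 2 * (-4) ^ m * (((1/2 :: 'a) gchoose Suc k) * ((-1/2) gchoose (m-k)))" if "k \<le> m" for k
  proof -
    have "(-4::'a) ^ m = (-4) ^ k * (-4) ^ (m-k)"
      using that by (simp flip: power_add)
    then show ?thesis
      unfolding catalan by (unfold central_binomial_gbinomial) (simp only: ac_simps)
  qed
  then have "(\<Sum>k=0..m. of_nat ((2*k) choose k) / of_nat (k+1) * of_nat ((2*(m-k)) choose (m-k)))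
      = 2 * (-4) ^ m * (\<Sum>k=0..m. ((1/2 :: 'a) gchoose Suc k) * ((-1/2) gchoose (m-k)))"
    unfolding sum_distrib_left by (intro sum.cong) simp_all
  also have "(\<Sum>k=0..m. ((1/2 :: 'a) gchoose Suc k) * ((-1/2) gchoose (m-k))) = - ((-1/2) gchoose Suc m)"
    using gbinomial_Vandermonde[of "1/2::'a" "-1/2" "Suc m"]
    by (subst (asm) sum.atLeast0_atMost_Suc_shift) (simp add: add_eq_0_iff)
  finally show ?thesis
    unfolding central_binomial_gbinomial by simp
qed

lemma binomial_square_mult_central_binomial:
  assumes "k \<le> m"
  shows "(m choose k)^2 * ((2*m) choose m)
           = ((2*m) choose (2*k)) * ((2*k) choose k) * ((2*(m-k)) choose (m-k))"
proof -
  have "real ((m choose k)^2 * ((2*m) choose m)) = fact (2*m) / (fact k * fact (m-k))^2"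
    using assms by (simp add: binomial_fact power2_eq_square)
  also have "\<dots> = real (((2*m) choose (2*k)) * ((2*k) choose k) * ((2*(m-k)) choose (m-k)))"
    using assms by (simp add: binomial_fact power2_eq_square right_diff_distrib')
  finally show ?thesis
    by (simp only: of_nat_eq_iff)
qed

lemma Suc_times_central_binomial_Suc:
  "(m+1) * ((2*(m+1)) choose (m+1)) = 2 * (2*m+1) * ((2*m) choose m)"
proof -
  have "(m+1) * ((2*(m+1)) choose (m+1)) = (2*m+2) * ((2*m+1) choose m)"
    using Suc_times_binomial[of m "2*m+1"] by simp
  also have "\<dots> = 2 * ((m+1) * ((2*m+1) choose (m+1)))"
    using binomial_symmetric[of "m+1" "2*m+1"] by simp
  also have "\<dots> = 2 * (2*m+1) * ((2*m) choose m)"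
    using Suc_times_binomial[of m "2*m"] by simp
  finally show ?thesis .
qed

lemma binomial_square_div_binomial_double:
  assumes "k \<le> m"
  shows "real ((m choose k) * (m choose k)) / real ((2*m) choose (2*k))
           = real (((2*k) choose k) * ((2*(m-k)) choose (m-k))) / real ((2*m) choose m)"
proof -
  have "real ((2*m) choose (2*k)) \<noteq> 0" "real ((2*m) choose m) \<noteq> 0"
    using assms by simp_all
  moreover have "real ((m choose k) * (m choose k) * ((2*m) choose m))
      = real (((2*m) choose (2*k)) * (((2*k) choose k) * ((2*(m-k)) choose (m-k))))"
    using binomial_square_mult_central_binomial[OF assms]
    by (simp only: power2_eq_square mult.assoc)
  ultimately show ?thesis
    by (simp only: of_nat_mult divide_eq_eq eq_divide_eq) (simp add: ac_simps)
qed

lemma sum_binomial_square_div_binomial_double: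
  "(\<Sum>k=0..m. real ((m choose k) * (m choose k)) / real ((2*m) choose (2*k)))
     = 4 ^ m / real ((2*m) choose m)"
proof -
  have "(\<Sum>k=0..m. real ((m choose k) * (m choose k)) / real ((2*m) choose (2*k)))
      = (\<Sum>k=0..m. real (((2*k) choose k) * ((2*(m-k)) choose (m-k)))) / real ((2*m) choose m)"
    unfolding sum_divide_distrib
    by (rule sum.cong[OF refl], rule binomial_square_div_binomial_double) simp
  also have "\<dots> = 4 ^ m / real ((2*m) choose m)"
    by (simp only: flip: of_nat_sum) (simp add: central_binomial_convolution)
  finally show ?thesis .
qed

lemma sum_binomial_mult_binomial_Suc_div_binomial_double:
  "(\<Sum>k=0..m. real ((m choose k) * ((m+1) choose (k+1))) / real ((2*m) choose (2*k)))
     = 2*m + 1"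
proof -
  have "real ((m choose k) * ((m+1) choose (k+1))) / real ((2*m) choose (2*k))
      = real (m+1) / real ((2*m) choose m)
        * (real ((2*k) choose k) / real (k+1) * real ((2*(m-k)) choose (m-k)))"
    if "k \<le> m" for k
  proof -
    have "real (k+1) * real ((m+1) choose (k+1)) = real (m+1) * real (m choose k)"
      using Suc_times_binomial[of k m] unfolding Suc_eq_plus1 by (metis of_nat_mult)
    then have absorb: "real ((m+1) choose (k+1)) = real (m+1) / real (k+1) * real (m choose k)"
      by (simp del: binomial_Suc_Suc add: field_simps)
    have "real ((m choose k) * ((m+1) choose (k+1))) / real ((2*m) choose (2*k))
        = real (m+1) / real (k+1) * (real ((m choose k) * (m choose k)) / real ((2*m) choose (2*k)))"
      unfolding of_nat_mult absorb by (simp del: binomial_Suc_Suc)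
    also have "\<dots> = real (m+1) / real (k+1)
        * (real (((2*k) choose k) * ((2*(m-k)) choose (m-k))) / real ((2*m) choose m))"
      unfolding binomial_square_div_binomial_double[OF that] ..
    finally show ?thesis
      by simp
  qed
  then have "(\<Sum>k=0..m. real ((m choose k) * ((m+1) choose (k+1))) / real ((2*m) choose (2*k)))
      = real (m+1) / real ((2*m) choose m)
        * (\<Sum>k=0..m. real ((2*k) choose k) / real (k+1) * real ((2*(m-k)) choose (m-k)))"
    unfolding sum_distrib_left by (intro sum.cong) simp_all
  also have "\<dots> = real ((m+1) * ((2*(m+1)) choose (m+1))) / (2 * real ((2*m) choose m))"
    unfolding catalan_convolution of_nat_mult by (simp del: binomial_Suc_Suc)
  also have "\<dots> = 2*m + 1"
    unfolding Suc_times_central_binomial_Suc by (simp add: field_simps)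
  finally show ?thesis .
qed

lemma even_dfact_eq: "even_dfact m = 2 ^ m * fact m"
  by (induction m) (simp_all add: even_dfact_def prod.cl_ivl_Suc fact_Suc algebra_simps)

lemma odd_dfact_mult_even_dfact: "odd_dfact m * even_dfact m = fact (2*m)"
proof (induction m)
  case 0
  then show ?case by (simp add: odd_dfact_def even_dfact_def)
next
  case (Suc m)
  have "odd_dfact (Suc m) * even_dfact (Suc m) = odd_dfact m * even_dfact m * ((2*m+1) * (2*m+2))"
    by (simp add: odd_dfact_def even_dfact_def prod.cl_ivl_Suc algebra_simps)
  also have "\<dots> = fact (2 * Suc m)"
    using Suc by (simp add: fact_Suc algebra_simps)
  finally show ?case .
qed

lemma central_binomial_eq_fact: "real ((2*m) choose m) = fact (2*m) / (fact m)^2"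
  using binomial_fact[of m "2*m"] by (simp add: power2_eq_square)

lemma even_dfact_div_odd_dfact:
  "real (even_dfact m) / real (odd_dfact m) = 4 ^ m / real ((2*m) choose m)"
proof -
  have "real (odd_dfact m) = fact (2*m) / (2 ^ m * fact m)"
    using arg_cong[OF odd_dfact_mult_even_dfact[of m], of real]
    by (simp add: even_dfact_eq field_simps)
  then show ?thesis
    by (simp add: even_dfact_eq central_binomial_eq_fact power2_eq_square power_mult_distrib[symmetric])
qed

theorem proposition5p1:
  fixes m :: nat
  assumes "m \<ge> 1"
  shows "(\<Sum>k=0..m. real ((m choose k) * (m choose k)) / real ((2*m) choose (2*k)))
           = real (even_dfact m) / real (odd_dfact m) \<and>
         real (even_dfact m) / real (odd_dfact m) = 4 ^ m * (fact m)^2 / fact (2*m) \<and>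
         (\<Sum>k=0..m. real ((m choose k) * (m choose (k+1))) / real ((2*m) choose (2*k)))
           = real (2*m+1) - real (even_dfact m) / real (odd_dfact m) \<and>
         (\<Sum>k=0..m. real ((m choose k) * ((m+1) choose (k+1))) / real ((2*m) choose (2*k)))
           = real (2*m+1)"
proof -
  have pascal: "real ((m choose k) * (m choose (k+1))) / real ((2*m) choose (2*k))
      = real ((m choose k) * ((m+1) choose (k+1))) / real ((2*m) choose (2*k))
        - real ((m choose k) * (m choose k)) / real ((2*m) choose (2*k))" for k
    by (simp add: diff_divide_distrib[symmetric] algebra_simps)
  have fact_form: "4 ^ m * (fact m)^2 / fact (2*m) = 4 ^ m / real ((2*m) choose m)"
    by (simp add: central_binomial_eq_fact)
  show ?thesis
    unfolding pascal sum_subtractf sum_binomial_square_div_binomial_double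
      sum_binomial_mult_binomial_Suc_div_binomial_double even_dfact_div_odd_dfact fact_form
    by simp
qed

end
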